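(* Let $n\in\mathbb{N}$ and define $T_n$ on $L^2((0,\infty))$ by $$(T_nf)(x) := \frac{1}{x^n}\int_0^x\int_0^{t_1}\cdots\int_0^{t_{n-1}} f(u)\,du\,dt_{n-1}\cdots dt_1,\qquad x\in(0,\infty),\ f\in L^2((0,\infty)).$$ Then $T_n$ is a bounded linear operator on $L^2((0,\infty))$ with norm $\|T_n\| = 2^n/(2n-1)!!$.
   Context: $(2n-1)!!=(2n-1)(2n-3)\cdots 3\cdot 1$. *)

theory Defs
  imports "HOL-Analysis.Analysis"
begin

fun dfact :: "nat \<Rightarrow> nat" where
  "dfact 0 = 1"
| "dfact (Suc 0) = 1"
| "dfact (Suc (Suc m)) = Suc (Suc m) * dfact m"

definition L2pos :: "(real \<Rightarrow> real) set" where
  "L2pos = {f. set_borel_measurable lborel {0<..} f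
               \<and> set_integrable lborel {0<..} (\<lambda>x. (f x)^2)}"

definition L2norm :: "(real \<Rightarrow> real) \<Rightarrow> real" where
  "L2norm f = sqrt (LINT x:{0<..}|lborel. (f x)^2)"

fun iter_int :: "nat \<Rightarrow> (real \<Rightarrow> real) \<Rightarrow> real \<Rightarrow> real" where
  "iter_int 0 f = f"
| "iter_int (Suc k) f = (\<lambda>x. LINT t:{0<..x}|lborel. iter_int k f t)"

definition T_op :: "nat \<Rightarrow> (real \<Rightarrow> real) \<Rightarrow> real \<Rightarrow> real" where
  "T_op n f x = iter_int n f x / x ^ n"

end

theory Submission
  imports Defs
begin

text \<open>
  Since \<open>iter_int (k+1) f x = \<integral>\<^sub>0\<^sup>x t\<^sup>k (T_op k f) t dt\<close>, the operator \<open>T_op (k+1)\<close> is the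
  weighted Hardy operator \<open>g \<mapsto> x\<^sup>-\<^sup>k\<^sup>-\<^sup>1 \<integral>\<^sub>0\<^sup>x t\<^sup>k g t dt\<close> applied to \<open>T_op k f\<close>.
  Cauchy-Schwarz with the splitting \<open>t\<^sup>a = t\<^sup>a\<^sup>/\<^sup>2\<^sup>-\<^sup>1\<^sup>/\<^sup>4 t\<^sup>a\<^sup>/\<^sup>2\<^sup>+\<^sup>1\<^sup>/\<^sup>4\<close>, followed by Tonelli,
  bounds the norm of this operator on \<open>L\<^sup>2(0,\<infinity>)\<close> by \<open>1/(k+1/2)\<close>, so
  \<open>\<parallel>T_op n\<parallel> \<le> \<Prod>\<^sub>k\<^sub><\<^sub>n 1/(k+1/2) = 1 / pochhammer (1/2) n = 2\<^sup>n/(2n-1)!!\<close>.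
  For sharpness, \<open>T_op n\<close> maps \<open>x\<^sup>-\<^sup>\<beta>\<close> restricted to \<open>(0,1]\<close> to a function that equals
  \<open>x\<^sup>-\<^sup>\<beta> / ((1-\<beta>)(2-\<beta>)\<cdots>(n-\<beta>))\<close> on \<open>(0,1]\<close>; for \<open>\<beta> < 1/2\<close> this is a
  test function in \<open>L\<^sup>2\<close>, and letting \<open>\<beta> \<rightarrow> 1/2\<close> gives the lower bound.
\<close>

lemma L2pos_measurable:
  "g \<in> L2pos \<Longrightarrow> (\<lambda>t. indicator {0<..} t * g t) \<in> borel_measurable lborel"
  unfolding L2pos_def set_borel_measurable_def by simp

lemma L2pos_integrable_square:
  "g \<in> L2pos \<Longrightarrow> integrable lborel (\<lambda>t. indicator {0<..} t * (g t)\<^sup>2)"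
  unfolding L2pos_def set_integrable_def by simp

lemma L2pos_cong:
  assumes "\<And>x. x > 0 \<Longrightarrow> f x = g x"
  shows "f \<in> L2pos \<longleftrightarrow> g \<in> L2pos" and "L2norm f = L2norm g"
proof -
  have "(\<lambda>x. indicator {0<..} x * f x) = (\<lambda>x. indicator {0<..} x * g x)"
    "(\<lambda>x. indicator {0<..} x * (f x)\<^sup>2) = (\<lambda>x. indicator {0<..} x * (g x)\<^sup>2)"
    using assms by (auto simp: indicator_def)
  then show "f \<in> L2pos \<longleftrightarrow> g \<in> L2pos" and "L2norm f = L2norm g"
    unfolding L2pos_def L2norm_def set_borel_measurable_def set_integrable_def
      set_lebesgue_integral_def by simp_all
qed

lemma L2norm_nonneg: "L2norm f \<ge> 0"
  unfolding L2norm_def set_lebesgue_integral_def by (auto intro: integral_nonneg_AE)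

lemma L2norm_square_eq_nn_integral:
  assumes "f \<in> L2pos"
  shows "ennreal ((L2norm f)\<^sup>2) = (\<integral>\<^sup>+x. ennreal (indicator {0<..} x * (f x)\<^sup>2) \<partial>lborel)"
proof -
  have "(LINT x:{0<..}|lborel. (f x)\<^sup>2) \<ge> 0"
    unfolding set_lebesgue_integral_def by (intro integral_nonneg_AE) auto
  then show ?thesis
    unfolding L2norm_def set_lebesgue_integral_def
    using nn_integral_eq_integral[OF L2pos_integrable_square[OF assms]] by simp
qed

lemma L2pos_if_nn_integral_le:
  assumes meas: "(\<lambda>x. indicator {0<..} x * h x) \<in> borel_measurable lborel"
    and le: "(\<integral>\<^sup>+x. ennreal (indicator {0<..} x * (h x)\<^sup>2) \<partial>lborel) \<le> ennreal (B\<^sup>2)"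
    and "B \<ge> 0"
  shows "h \<in> L2pos" and "L2norm h \<le> B"
proof -
  have [measurable]: "(\<lambda>x. indicator {0<..} x * (h x)\<^sup>2) \<in> borel_measurable lborel"
  proof -
    have eq: "(\<lambda>x. indicator {0<..} x * (h x)\<^sup>2) = (\<lambda>x. (indicator {0<..} x * h x)\<^sup>2)"
      by (auto simp: indicator_def)
    show ?thesis unfolding eq by (rule borel_measurable_power[OF meas])
  qed
  have "integrable lborel (\<lambda>x. indicator {0<..} x * (h x)\<^sup>2)"
    using le by (intro integrableI_nonneg) (auto simp: top.not_eq_extremum le_less_trans)
  with meas show h: "h \<in> L2pos"
    unfolding L2pos_def set_borel_measurable_def set_integrable_def by simp
  have "ennreal ((L2norm h)\<^sup>2) \<le> ennreal (B\<^sup>2)"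
    using le L2norm_square_eq_nn_integral[OF h] by simp
  then have "(L2norm h)\<^sup>2 \<le> B\<^sup>2"
    by (simp add: ennreal_le_iff)
  then show "L2norm h \<le> B"
    using \<open>B \<ge> 0\<close> by (rule power2_le_imp_le)
qed

lemma L2pos_cmult:
  assumes "f \<in> L2pos"
  shows "(\<lambda>x. c * f x) \<in> L2pos" and "L2norm (\<lambda>x. c * f x) = \<bar>c\<bar> * L2norm f"
proof -
  have "set_integrable lborel {0<..} (\<lambda>x. c\<^sup>2 * (f x)\<^sup>2)"
    using assms unfolding L2pos_def by (simp add: set_integrable_mult_right)
  moreover have "set_borel_measurable lborel {0<..} (\<lambda>x. c * f x)"
  proof -
    have eq: "(\<lambda>x. indicator {0<..} x *\<^sub>R (c * f x)) = (\<lambda>x. c * (indicator {0<..} x * f x))"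
      by (auto simp: indicator_def)
    show ?thesis unfolding set_borel_measurable_def eq
      by (rule borel_measurable_times[OF borel_measurable_const L2pos_measurable[OF assms]])
  qed
  ultimately show "(\<lambda>x. c * f x) \<in> L2pos"
    unfolding L2pos_def by (simp add: power_mult_distrib)
  show "L2norm (\<lambda>x. c * f x) = \<bar>c\<bar> * L2norm f"
    unfolding L2norm_def by (simp add: power_mult_distrib real_sqrt_mult)
qed

lemma L2norm_mono:
  assumes "f \<in> L2pos" "g \<in> L2pos" and "\<And>x. x > 0 \<Longrightarrow> \<bar>f x\<bar> \<le> \<bar>g x\<bar>"
  shows "L2norm f \<le> L2norm g"
  unfolding L2norm_def using assms
  by (intro real_sqrt_le_mono set_integral_mono)
     (auto simp: L2pos_def abs_le_square_iff)

lemma nn_integral_powr_from_0: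
  fixes a x :: real
  assumes "a > -1" "x > 0"
  shows "(\<integral>\<^sup>+t. ennreal (indicator {0<..x} t * t powr a) \<partial>lborel) = ennreal (x powr (a + 1) / (a + 1))"
proof -
  have "((\<lambda>t. t powr a) has_integral (x powr (a + 1) / (a + 1))) {0..x}"
    using has_integral_powr_from_0[of a x] assms by simp
  then have "((\<lambda>t. t powr a) has_integral (x powr (a + 1) / (a + 1))) {0<..x}"
    by (rule has_integral_spike_set_eq[THEN iffD1, rotated -1])
       (auto intro: negligible_subset[of "{0}"])
  from nn_integral_has_integral_lebesgue[OF _ this] show ?thesis by simp
qed

lemma set_integral_powr_from_0:
  fixes a x :: real
  assumes "a > -1" "x > 0"
  shows "(LINT t:{0<..x}|lborel. t powr a) = x powr (a + 1) / (a + 1)"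
proof -
  have "(LINT t:{0<..x}|lborel. t powr a) = enn2real (\<integral>\<^sup>+t. ennreal (indicator {0<..x} t * t powr a) \<partial>lborel)"
    unfolding set_lebesgue_integral_def by (simp add: integral_eq_nn_integral)
  also have "\<dots> = x powr (a + 1) / (a + 1)"
    unfolding nn_integral_powr_from_0[OF assms] using assms by simp
  finally show ?thesis .
qed

lemma nn_integral_powr_to_inf:
  fixes a e :: real
  assumes "e < -1" "a > 0"
  shows "(\<integral>\<^sup>+x. ennreal (indicator {a..} x * x powr e) \<partial>lborel) = ennreal (- (a powr (e + 1)) / (e + 1))"
  using nn_integral_has_integral_lebesgue[OF _ has_integral_powr_to_inf[OF assms]] assms by simp

lemma abs_le_one_plus_square: "\<bar>y::real\<bar> \<le> 1 + y\<^sup>2"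
proof (cases "\<bar>y\<bar> \<le> 1")
  case False
  then have "\<bar>y\<bar> * 1 \<le> \<bar>y\<bar> * \<bar>y\<bar>"
    by (intro mult_left_mono) auto
  then show ?thesis by (simp add: power2_eq_square)
qed (simp add: add_increasing2)

lemma set_integrable_powr_mult_L2pos:
  assumes g: "g \<in> L2pos" and x: "x > 0" and a: "a \<ge> 0"
  shows "set_integrable lborel {0<..x} (\<lambda>t. t powr a * g t)"
proof -
  define gg where "gg = (\<lambda>t. indicator {0<..} t * g t)"
  have [measurable]: "gg \<in> borel_measurable lborel"
    using L2pos_measurable[OF g] by (simp add: gg_def)
  have bound: "integrable lborel (\<lambda>t. x powr a * (indicator {0<..x} t + indicator {0<..} t * (g t)\<^sup>2))"
    using L2pos_integrable_square[OF g] x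
    by (intro integrable_mult_right integrable_add integrable_real_indicator) auto
  have "integrable lborel (\<lambda>t. indicator {0<..x} t * t powr a * gg t)"
  proof (rule Bochner_Integration.integrable_bound[OF bound])
    show "AE t in lborel. norm (indicator {0<..x} t * t powr a * gg t)
        \<le> norm (x powr a * (indicator {0<..x} t + indicator {0<..} t * (g t)\<^sup>2))"
    proof (rule AE_I2)
      fix t :: real
      show "norm (indicator {0<..x} t * t powr a * gg t)
          \<le> norm (x powr a * (indicator {0<..x} t + indicator {0<..} t * (g t)\<^sup>2))"
      proof (cases "t \<in> {0<..x}")
        case True
        then have "t powr a * \<bar>g t\<bar> \<le> x powr a * (1 + (g t)\<^sup>2)"
          using a by (intro mult_mono powr_mono2 abs_le_one_plus_square) auto
        then show ?thesis using True by (simp add: gg_def abs_mult)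
      qed (simp add: gg_def)
    qed
  qed measurable
  moreover have "(\<lambda>t. indicator {0<..x} t *\<^sub>R (t powr a * g t)) = (\<lambda>t. indicator {0<..x} t * t powr a * gg t)"
    by (auto simp: gg_def indicator_def)
  ultimately show ?thesis unfolding set_integrable_def by simp
qed

definition hardy_op :: "real \<Rightarrow> (real \<Rightarrow> real) \<Rightarrow> real \<Rightarrow> real" where
  "hardy_op a g x = (LINT t:{0<..x}|lborel. t powr a * g t) / x powr (a + 1)"

lemma borel_measurable_hardy_op:
  assumes "g \<in> L2pos"
  shows "hardy_op a g \<in> borel_measurable lborel"
proof -
  define gg where "gg = (\<lambda>t. indicator {0<..} t * g t)"
  have [measurable]: "gg \<in> borel_measurable lborel"
    using L2pos_measurable[OF assms] by (simp add: gg_def)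
  have eq: "(\<lambda>x. LINT t:{0<..x}|lborel. t powr a * g t)
      = (\<lambda>x. integral\<^sup>L lborel (\<lambda>t. if 0 < t \<and> t \<le> x then t powr a * gg t else 0))"
    unfolding set_lebesgue_integral_def
    by (intro ext Bochner_Integration.integral_cong) (auto simp: gg_def indicator_def)
  have [measurable]: "(\<lambda>x. LINT t:{0<..x}|lborel. t powr a * g t) \<in> borel_measurable lborel"
    unfolding eq by measurable
  show ?thesis
    unfolding hardy_op_def by measurable
qed

lemma cauchy_schwarz_powr_weight:
  assumes g: "g \<in> L2pos" and x: "x > 0" and a: "a \<ge> 0"
  shows "ennreal ((LINT t:{0<..x}|lborel. t powr a * g t)\<^sup>2) \<le>
     ennreal (x powr (a + 1/2) / (a + 1/2)) *
     (\<integral>\<^sup>+t. ennreal (indicator {0<..x} t * t powr (a + 1/2) * (g t)\<^sup>2) \<partial>lborel)"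
proof -
  define gg where "gg = (\<lambda>t. indicator {0<..} t * g t)"
  have [measurable]: "gg \<in> borel_measurable lborel"
    using L2pos_measurable[OF g] by (simp add: gg_def)
  define u where "u t = ennreal (indicator {0<..x} t * t powr (a/2 - 1/4))" for t
  define v where "v t = ennreal (indicator {0<..x} t * t powr (a/2 + 1/4) * \<bar>gg t\<bar>)" for t
  have sq: "(t powr b)\<^sup>2 = t powr (2 * b)" if "t > 0" for t b :: real
    using that by (simp add: powr_power)
  have "integrable lborel (\<lambda>t. indicator {0<..x} t *\<^sub>R (t powr a * g t))"
    using set_integrable_powr_mult_L2pos[OF g x a] unfolding set_integrable_def .
  then have "ennreal \<bar>LINT t:{0<..x}|lborel. t powr a * g t\<bar>
      \<le> (\<integral>\<^sup>+t. norm (indicator {0<..x} t *\<^sub>R (t powr a * g t)) \<partial>lborel)"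
    unfolding set_lebesgue_integral_def using integral_norm_bound_ennreal by fastforce
  also have "\<dots> = (\<integral>\<^sup>+t. u t * v t \<partial>lborel)"
  proof (intro nn_integral_cong)
    fix t :: real
    show "ennreal (norm (indicator {0<..x} t *\<^sub>R (t powr a * g t))) = u t * v t"
    proof (cases "t \<in> {0<..x}")
      case True
      have "t powr a = t powr (a/2 - 1/4) * t powr (a/2 + 1/4)"
        by (simp add: powr_add[symmetric])
      then show ?thesis using True
        by (simp add: u_def v_def gg_def abs_mult ennreal_mult[symmetric] mult.assoc)
    qed (simp add: u_def v_def)
  qed
  finally have "(ennreal \<bar>LINT t:{0<..x}|lborel. t powr a * g t\<bar>)\<^sup>2 \<le> (\<integral>\<^sup>+t. u t * v t \<partial>lborel)\<^sup>2"
    by (rule power_mono) simp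
  also have "\<dots> \<le> (\<integral>\<^sup>+t. u t ^ 2 \<partial>lborel) * (\<integral>\<^sup>+t. v t ^ 2 \<partial>lborel)"
    by (rule Cauchy_Schwarz_nn_integral) (simp_all add: u_def v_def)
  also have "(\<integral>\<^sup>+t. u t ^ 2 \<partial>lborel) = (\<integral>\<^sup>+t. ennreal (indicator {0<..x} t * t powr (a - 1/2)) \<partial>lborel)"
  proof (intro nn_integral_cong)
    fix t :: real
    show "u t ^ 2 = ennreal (indicator {0<..x} t * t powr (a - 1/2))"
      by (cases "t \<in> {0<..x}") (simp_all add: u_def ennreal_power sq)
  qed
  also have "\<dots> = ennreal (x powr (a + 1/2) / (a + 1/2))"
    using nn_integral_powr_from_0[of "a - 1/2" x] x a by (simp add: algebra_simps)
  also have "(\<integral>\<^sup>+t. v t ^ 2 \<partial>lborel)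
      = (\<integral>\<^sup>+t. ennreal (indicator {0<..x} t * t powr (a + 1/2) * (g t)\<^sup>2) \<partial>lborel)"
  proof (intro nn_integral_cong)
    fix t :: real
    show "v t ^ 2 = ennreal (indicator {0<..x} t * t powr (a + 1/2) * (g t)\<^sup>2)"
      by (cases "t \<in> {0<..x}") (simp_all add: v_def gg_def ennreal_power power_mult_distrib sq)
  qed
  finally show ?thesis
    by (simp add: ennreal_power)
qed

lemma hardy_op_square_le:
  assumes g: "g \<in> L2pos" and x: "x > 0" and a: "a \<ge> 0"
  shows "ennreal ((hardy_op a g x)\<^sup>2) \<le> ennreal (1 / (a + 1/2)) *
     (ennreal (x powr (- a - 3/2)) *
      (\<integral>\<^sup>+t. ennreal (indicator {0<..x} t * t powr (a + 1/2) * (g t)\<^sup>2) \<partial>lborel))"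
proof -
  define I where "I = (\<integral>\<^sup>+t. ennreal (indicator {0<..x} t * t powr (a + 1/2) * (g t)\<^sup>2) \<partial>lborel)"
  have "x powr (- 2 * a - 2) = x powr (- (2 * (a + 1)))"
    by (intro arg_cong[where f = "(powr) x"]) simp
  also have "\<dots> = inverse ((x powr (a + 1))\<^sup>2)"
    using x by (subst powr_minus) (simp add: powr_power)
  finally have "(hardy_op a g x)\<^sup>2 = (LINT t:{0<..x}|lborel. t powr a * g t)\<^sup>2 * x powr (- 2 * a - 2)"
    by (simp add: hardy_op_def divide_inverse power_mult_distrib power_inverse)
  then have "ennreal ((hardy_op a g x)\<^sup>2)
      = ennreal ((LINT t:{0<..x}|lborel. t powr a * g t)\<^sup>2) * ennreal (x powr (- 2 * a - 2))"
    by (simp add: ennreal_mult)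
  also have "\<dots> \<le> ennreal (x powr (a + 1/2) / (a + 1/2)) * I * ennreal (x powr (- 2 * a - 2))"
    unfolding I_def by (intro mult_right_mono cauchy_schwarz_powr_weight[OF g x a]) simp
  also have "\<dots> = ennreal (x powr (a + 1/2) / (a + 1/2) * x powr (- 2 * a - 2)) * I"
    using a by (subst ennreal_mult) (simp_all add: mult_ac)
  also have "x powr (a + 1/2) / (a + 1/2) * x powr (- 2 * a - 2) = 1 / (a + 1/2) * x powr (- a - 3/2)"
    by (simp add: powr_add[symmetric])
  also have "ennreal (1 / (a + 1/2) * x powr (- a - 3/2)) * I
      = ennreal (1 / (a + 1/2)) * (ennreal (x powr (- a - 3/2)) * I)"
    using a by (subst ennreal_mult) (auto simp: mult.assoc)
  finally show ?thesis
    unfolding I_def .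
qed

text \<open>After Tonelli, the weight \<open>t powr (a + 1/2)\<close> is cancelled exactly by
  \<open>\<integral>\<^sub>t\<^sup>\<infinity> x powr (- a - 3/2) dx = t powr (- a - 1/2) / (a + 1/2)\<close>.\<close>

lemma nn_integral_hardy_kernel:
  fixes G :: "real \<Rightarrow> ennreal"
  assumes [measurable]: "G \<in> borel_measurable lborel" and a: "a > -1/2"
  shows "(\<integral>\<^sup>+x. ennreal (x powr (- a - 3/2)) *
            (\<integral>\<^sup>+t. ennreal (indicator {0<..x} t * t powr (a + 1/2)) * G t \<partial>lborel) \<partial>lborel)
       = ennreal (1 / (a + 1/2)) * (\<integral>\<^sup>+t. indicator {0<..} t * G t \<partial>lborel)"
proof -
  define F where "F x t =
      (if 0 < t \<and> t \<le> x then ennreal (x powr (- a - 3/2) * t powr (a + 1/2)) * G t else 0)"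
    for x t :: real
  have [measurable]: "(\<lambda>(x, t). F x t) \<in> borel_measurable (lborel \<Otimes>\<^sub>M lborel)"
    unfolding F_def by measurable
  define q where "q = - a - 3/2 + 1"
  have q: "q = - (a + 1/2)"
    unfolding q_def by simp
  have inner: "(\<integral>\<^sup>+x. F x t \<partial>lborel) = ennreal (1 / (a + 1/2)) * (indicator {0<..} t * G t)" for t
  proof (cases "t > 0")
    case t: True
    have "(\<integral>\<^sup>+x. F x t \<partial>lborel)
        = (\<integral>\<^sup>+x. G t * ennreal (t powr (a + 1/2)) * ennreal (indicator {t..} x * x powr (- a - 3/2)) \<partial>lborel)"
      using t by (intro nn_integral_cong) (auto simp: F_def ennreal_mult' mult_ac)
    also have "\<dots> = G t * (ennreal (t powr (a + 1/2)) * ennreal (- (t powr q) / q))"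
    proof -
      have "- a - 3/2 < -1"
        using a by (simp add: field_simps)
      from nn_integral_powr_to_inf[OF this t] show ?thesis
        unfolding q_def by (simp add: nn_integral_cmult mult.assoc)
    qed
    also have "ennreal (t powr (a + 1/2)) * ennreal (- (t powr q) / q) = ennreal (1 / (a + 1/2))"
    proof -
      have "- (t powr q) / q = t powr q / (a + 1/2)"
        unfolding q by (rule minus_divide_divide)
      moreover have "ennreal (t powr (a + 1/2)) * ennreal (t powr q / (a + 1/2))
          = ennreal (t powr (a + 1/2) * (t powr q / (a + 1/2)))"
        using a by (intro ennreal_mult[symmetric]) auto
      moreover have "t powr (a + 1/2) * t powr q = 1"
        using t by (simp add: q powr_add[symmetric])
      ultimately show ?thesis
        by simp
    qed
    finally show ?thesis using t by (simp add: mult_ac)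
  qed (simp add: F_def)
  have "(\<integral>\<^sup>+x. ennreal (x powr (- a - 3/2)) *
            (\<integral>\<^sup>+t. ennreal (indicator {0<..x} t * t powr (a + 1/2)) * G t \<partial>lborel) \<partial>lborel)
      = (\<integral>\<^sup>+x. (\<integral>\<^sup>+t. F x t \<partial>lborel) \<partial>lborel)"
  proof (intro nn_integral_cong)
    fix x :: real
    have "(\<integral>\<^sup>+t. F x t \<partial>lborel) = (\<integral>\<^sup>+t. ennreal (x powr (- a - 3/2)) *
        (ennreal (indicator {0<..x} t * t powr (a + 1/2)) * G t) \<partial>lborel)"
      by (intro nn_integral_cong) (simp add: F_def indicator_def ennreal_mult' mult_ac)
    then show "ennreal (x powr (- a - 3/2)) *
        (\<integral>\<^sup>+t. ennreal (indicator {0<..x} t * t powr (a + 1/2)) * G t \<partial>lborel)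
        = (\<integral>\<^sup>+t. F x t \<partial>lborel)"
      by (simp add: nn_integral_cmult)
  qed
  also have "\<dots> = (\<integral>\<^sup>+t. (\<integral>\<^sup>+x. F x t \<partial>lborel) \<partial>lborel)"
    by (rule lborel_pair.Fubini'[symmetric]) measurable
  finally show ?thesis
    by (simp add: inner nn_integral_cmult)
qed

lemma nn_integral_hardy_op_square_le:
  assumes g: "g \<in> L2pos" and a: "a \<ge> 0"
  shows "(\<integral>\<^sup>+x. ennreal (indicator {0<..} x * (hardy_op a g x)\<^sup>2) \<partial>lborel)
      \<le> ennreal ((L2norm g / (a + 1/2))\<^sup>2)"
proof -
  define G where "G t = ennreal ((indicator {0<..} t * g t)\<^sup>2)" for t
  have [measurable]: "G \<in> borel_measurable lborel"
    unfolding G_def using L2pos_measurable[OF g] by measurable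
  have "(\<integral>\<^sup>+x. ennreal (indicator {0<..} x * (hardy_op a g x)\<^sup>2) \<partial>lborel)
      \<le> (\<integral>\<^sup>+x. ennreal (1 / (a + 1/2)) * (ennreal (x powr (- a - 3/2)) *
            (\<integral>\<^sup>+t. ennreal (indicator {0<..x} t * t powr (a + 1/2)) * G t \<partial>lborel)) \<partial>lborel)"
  proof (intro nn_integral_mono)
    fix x :: real
    show "ennreal (indicator {0<..} x * (hardy_op a g x)\<^sup>2) \<le> ennreal (1 / (a + 1/2)) *
        (ennreal (x powr (- a - 3/2)) *
         (\<integral>\<^sup>+t. ennreal (indicator {0<..x} t * t powr (a + 1/2)) * G t \<partial>lborel))"
    proof (cases "x > 0")
      case True
      have "(\<integral>\<^sup>+t. ennreal (indicator {0<..x} t * t powr (a + 1/2) * (g t)\<^sup>2) \<partial>lborel)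
          = (\<integral>\<^sup>+t. ennreal (indicator {0<..x} t * t powr (a + 1/2)) * G t \<partial>lborel)"
        by (intro nn_integral_cong) (auto simp: G_def indicator_def ennreal_mult')
      with hardy_op_square_le[OF g True a] show ?thesis
        using True by simp
    qed simp
  qed
  also have "\<dots> = ennreal (1 / (a + 1/2)) * (ennreal (1 / (a + 1/2)) * (\<integral>\<^sup>+t. indicator {0<..} t * G t \<partial>lborel))"
  proof -
    have [measurable]: "Measurable.pred (lborel \<Otimes>\<^sub>M lborel) (\<lambda>p :: real \<times> real. snd p \<in> {0<..fst p})"
      unfolding greaterThanAtMost_iff by measurable
    have "(\<lambda>x. ennreal (x powr (- a - 3/2)) *
        (\<integral>\<^sup>+t. ennreal (indicator {0<..x} t * t powr (a + 1/2)) * G t \<partial>lborel)) \<in> borel_measurable lborel"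
      by measurable
    from nn_integral_cmult[OF this] show ?thesis
      using a by (simp add: nn_integral_hardy_kernel)
  qed
  also have "(\<integral>\<^sup>+t. indicator {0<..} t * G t \<partial>lborel) = ennreal ((L2norm g)\<^sup>2)"
    unfolding L2norm_square_eq_nn_integral[OF g]
    by (intro nn_integral_cong) (auto simp: G_def indicator_def)
  also have "ennreal (1 / (a + 1/2)) * (ennreal (1 / (a + 1/2)) * ennreal ((L2norm g)\<^sup>2))
      = ennreal ((L2norm g / (a + 1/2))\<^sup>2)"
    using a by (simp add: ennreal_mult[symmetric] power_divide power2_eq_square)
  finally show ?thesis .
qed

theorem hardy_inequality:
  assumes g: "g \<in> L2pos" and a: "a \<ge> 0"
  shows "hardy_op a g \<in> L2pos" and "L2norm (hardy_op a g) \<le> L2norm g / (a + 1/2)"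
proof -
  have "(\<lambda>x. indicator {0<..} x * hardy_op a g x) \<in> borel_measurable lborel"
    using borel_measurable_hardy_op[OF g] by measurable
  moreover have "L2norm g / (a + 1/2) \<ge> 0"
    using a L2norm_nonneg[of g] by simp
  ultimately show "hardy_op a g \<in> L2pos" and "L2norm (hardy_op a g) \<le> L2norm g / (a + 1/2)"
    using L2pos_if_nn_integral_le nn_integral_hardy_op_square_le[OF g a] by blast+
qed

lemma iter_int_eq_powr_T_op: "x > 0 \<Longrightarrow> iter_int k f x = x powr real k * T_op k f x"
  by (simp add: T_op_def powr_realpow)

lemma T_op_Suc_eq_hardy_op:
  assumes "x > 0"
  shows "T_op (Suc k) f x = hardy_op (real k) (T_op k f) x"
proof -
  have "(LINT t:{0<..x}|lborel. iter_int k f t) = (LINT t:{0<..x}|lborel. t powr real k * T_op k f t)"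
    by (rule set_lebesgue_integral_cong) (auto simp: iter_int_eq_powr_T_op)
  moreover have "x powr (real k + 1) = x ^ Suc k"
    using powr_realpow[OF assms, of "Suc k"] by (simp only: of_nat_Suc add.commute)
  ultimately show ?thesis
    by (simp add: T_op_def hardy_op_def)
qed

lemma T_op_L2_bound:
  assumes "f \<in> L2pos"
  shows "T_op n f \<in> L2pos \<and> L2norm (T_op n f) \<le> L2norm f / pochhammer (1/2) n"
proof (induction n)
  case 0
  show ?case
    using assms by (simp add: T_op_def)
next
  case (Suc k)
  then have Tk: "T_op k f \<in> L2pos" and IH: "L2norm (T_op k f) \<le> L2norm f / pochhammer (1/2) k"
    by auto
  have agree: "T_op (Suc k) f x = hardy_op (real k) (T_op k f) x" if "x > 0" for x
    using T_op_Suc_eq_hardy_op[OF that] .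
  have "L2norm (T_op (Suc k) f) = L2norm (hardy_op (real k) (T_op k f))"
    by (rule L2pos_cong(2)[OF agree])
  also have "\<dots> \<le> L2norm (T_op k f) / (real k + 1/2)"
    using hardy_inequality(2)[OF Tk] by simp
  also have "\<dots> \<le> L2norm f / pochhammer (1/2) k / (real k + 1/2)"
    using IH by (intro divide_right_mono) auto
  also have "\<dots> = L2norm f / pochhammer (1/2) (Suc k)"
    by (simp add: pochhammer_Suc add.commute)
  finally show ?case
    using hardy_inequality(1)[OF Tk] L2pos_cong(1)[OF agree] by simp
qed

lemma set_integrable_iter_int:
  assumes "f \<in> L2pos" "x > 0"
  shows "set_integrable lborel {0<..x} (iter_int k f)"
proof -
  have "set_integrable lborel {0<..x} (\<lambda>t. t powr real k * T_op k f t)"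
    using set_integrable_powr_mult_L2pos T_op_L2_bound assms by simp
  then show ?thesis
    by (rule set_integrable_cong[THEN iffD1, rotated -1]) (auto simp: iter_int_eq_powr_T_op)
qed

lemma iter_int_linear:
  assumes f: "f \<in> L2pos" and g: "g \<in> L2pos" and "x > 0"
  shows "iter_int k (\<lambda>y. a * f y + b * g y) x = a * iter_int k f x + b * iter_int k g x"
  using \<open>x > 0\<close>
proof (induction k arbitrary: x)
  case (Suc k)
  have "iter_int (Suc k) (\<lambda>y. a * f y + b * g y) x
      = (LINT t:{0<..x}|lborel. a * iter_int k f t + b * iter_int k g t)"
    using Suc.IH by (simp add: set_lebesgue_integral_cong)
  also have "\<dots> = a * iter_int (Suc k) f x + b * iter_int (Suc k) g x"
    using set_integrable_iter_int[OF f Suc.prems] set_integrable_iter_int[OF g Suc.prems]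
    by (simp add: set_integral_add set_integral_mult_right)
  finally show ?case .
qed simp

lemma real_dfact_eq_pochhammer: "real (dfact (2 * n - 1)) = 2 ^ n * pochhammer (1/2) n"
proof (induction n)
  case (Suc n)
  have "dfact (2 * Suc n - 1) = (2 * n + 1) * dfact (2 * n - 1)"
    by (cases n) (simp_all add: numeral_eq_Suc)
  then show ?case
    using Suc.IH by (simp add: pochhammer_Suc field_simps)
qed simp

definition trunc_powr :: "real \<Rightarrow> real \<Rightarrow> real" where
  "trunc_powr \<beta> x = (if 0 < x \<and> x \<le> 1 then x powr (- \<beta>) else 0)"

lemma iter_int_trunc_powr:
  assumes "\<beta> < 1" and "0 < x" "x \<le> 1"
  shows "iter_int k (trunc_powr \<beta>) x = x powr (real k - \<beta>) / pochhammer (1 - \<beta>) k"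
  using assms(2,3)
proof (induction k arbitrary: x)
  case 0
  then show ?case
    by (simp add: trunc_powr_def)
next
  case (Suc k)
  have "(LINT t:{0<..x}|lborel. iter_int k (trunc_powr \<beta>) t)
      = (LINT t:{0<..x}|lborel. t powr (real k - \<beta>) / pochhammer (1 - \<beta>) k)"
    by (rule set_lebesgue_integral_cong) (use Suc in auto)
  then have "iter_int (Suc k) (trunc_powr \<beta>) x
      = (LINT t:{0<..x}|lborel. t powr (real k - \<beta>)) / pochhammer (1 - \<beta>) k"
    by simp
  also have "\<dots> = x powr (real k - \<beta> + 1) / (real k - \<beta> + 1) / pochhammer (1 - \<beta>) k"
    using assms Suc.prems by (simp add: set_integral_powr_from_0)
  also have "\<dots> = x powr (real (Suc k) - \<beta>) / pochhammer (1 - \<beta>) (Suc k)"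
    by (simp add: pochhammer_Suc algebra_simps)
  finally show ?case .
qed

lemma T_op_trunc_powr:
  assumes "\<beta> < 1" and "0 < x" "x \<le> 1"
  shows "T_op n (trunc_powr \<beta>) x = trunc_powr \<beta> x / pochhammer (1 - \<beta>) n"
proof -
  have "x powr (real n - \<beta>) = x ^ n * x powr (- \<beta>)"
    using assms by (simp add: powr_add[symmetric] powr_realpow[symmetric])
  then show ?thesis
    using assms by (simp add: T_op_def iter_int_trunc_powr trunc_powr_def)
qed

lemma trunc_powr_L2pos:
  assumes "\<beta> < 1/2"
  shows "trunc_powr \<beta> \<in> L2pos" and "L2norm (trunc_powr \<beta>) = sqrt (1 / (1 - 2 * \<beta>))"
proof -
  have sq: "indicator {0<..} x * (trunc_powr \<beta> x)\<^sup>2 = indicator {0<..1} x * x powr (- 2 * \<beta>)" for x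
    by (simp add: trunc_powr_def indicator_def powr_power)
  have nn: "(\<integral>\<^sup>+x. ennreal (indicator {0<..1} x * x powr (- 2 * \<beta>)) \<partial>lborel) = ennreal (1 / (1 - 2 * \<beta>))"
    using nn_integral_powr_from_0[of "- 2 * \<beta>" 1] assms by (simp add: algebra_simps)
  then have int: "integrable lborel (\<lambda>x. indicator {0<..1} x * x powr (- 2 * \<beta>))"
    by (intro integrableI_nn_integral_finite) auto
  have "(\<lambda>x. indicator {0<..} x * trunc_powr \<beta> x) \<in> borel_measurable lborel"
    unfolding trunc_powr_def by measurable
  with int show "trunc_powr \<beta> \<in> L2pos"
    unfolding L2pos_def set_borel_measurable_def set_integrable_def by (simp add: sq del: indicator_simps)
  show "L2norm (trunc_powr \<beta>) = sqrt (1 / (1 - 2 * \<beta>))"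
    using nn_integral_eq_integral[OF int] nn assms
    unfolding L2norm_def set_lebesgue_integral_def by (simp add: sq del: indicator_simps)
qed

lemma T_op_bound_ge_inverse_pochhammer:
  assumes "\<beta> < 1/2" and K: "\<forall>f\<in>L2pos. L2norm (T_op n f) \<le> K * L2norm f"
  shows "1 / pochhammer (1 - \<beta>) n \<le> K"
proof -
  define P where "P = pochhammer (1 - \<beta>) n"
  have "P > 0"
    unfolding P_def using assms by (intro pochhammer_pos) simp
  have f: "trunc_powr \<beta> \<in> L2pos" and pos: "L2norm (trunc_powr \<beta>) > 0"
    using trunc_powr_L2pos[OF assms(1)] assms by simp_all
  have "1 / P * L2norm (trunc_powr \<beta>) = L2norm (\<lambda>x. 1 / P * trunc_powr \<beta> x)"
    using L2pos_cmult(2)[OF f, of "1 / P"] \<open>P > 0\<close> by simp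
  also have "\<dots> \<le> L2norm (T_op n (trunc_powr \<beta>))"
  proof (rule L2norm_mono)
    show "(\<lambda>x. 1 / P * trunc_powr \<beta> x) \<in> L2pos" "T_op n (trunc_powr \<beta>) \<in> L2pos"
      using L2pos_cmult(1)[OF f, of "1 / P"] T_op_L2_bound[OF f] by auto
    show "\<bar>1 / P * trunc_powr \<beta> x\<bar> \<le> \<bar>T_op n (trunc_powr \<beta>) x\<bar>" if "x > 0" for x
      using T_op_trunc_powr[of \<beta> x n] that assms(1) by (cases "x \<le> 1") (simp_all add: P_def trunc_powr_def)
  qed
  also have "\<dots> \<le> K * L2norm (trunc_powr \<beta>)"
    using K f by blast
  finally have "L2norm (trunc_powr \<beta>) * (1 / P) \<le> L2norm (trunc_powr \<beta>) * K"
    by (simp only: mult.commute)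
  then show ?thesis
    unfolding P_def by (rule mult_left_le_imp_le[OF _ pos])
qed

lemma T_op_bound_ge_inverse_pochhammer_half:
  assumes K: "\<forall>f\<in>L2pos. L2norm (T_op n f) \<le> K * L2norm f"
  shows "1 / pochhammer (1/2) n \<le> K"
proof -
  have "isCont (\<lambda>\<beta>. pochhammer (1 - \<beta>) n) (1/2 :: real)"
    by (rule isCont_o2[OF _ isCont_pochhammer]) (intro continuous_intros)
  then have "isCont (\<lambda>\<beta>. 1 / pochhammer (1 - \<beta>) n) (1/2 :: real)"
    using pochhammer_pos[of "1/2 :: real" n] by (intro continuous_intros) auto
  then have "((\<lambda>\<beta>. 1 / pochhammer (1 - \<beta>) n) \<longlongrightarrow> 1 / pochhammer (1/2) n) (at_left (1/2 :: real))"
    unfolding isCont_def by (auto intro: tendsto_within_subset)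
  moreover have "\<forall>\<^sub>F \<beta> in at_left (1/2 :: real). 1 / pochhammer (1 - \<beta>) n \<le> K"
    by (rule eventually_mono[OF eventually_at_left_real[of 0]])
       (use T_op_bound_ge_inverse_pochhammer[OF _ K] in auto)
  ultimately show ?thesis
    by (auto intro: tendsto_upperbound)
qed

theorem theorem7p1:
  fixes n :: nat
  assumes "n \<ge> 1"
  shows "(\<forall>f\<in>L2pos. T_op n f \<in> L2pos)
    \<and> (\<forall>f\<in>L2pos. \<forall>g\<in>L2pos. \<forall>a b::real. \<forall>x>0.
          T_op n (\<lambda>y. a * f y + b * g y) x = a * T_op n f x + b * T_op n g x)
    \<and> (\<forall>f\<in>L2pos. L2norm (T_op n f) \<le> (2 ^ n / real (dfact (2 * n - 1))) * L2norm f)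
    \<and> (\<forall>K::real. (\<forall>f\<in>L2pos. L2norm (T_op n f) \<le> K * L2norm f)
          \<longrightarrow> 2 ^ n / real (dfact (2 * n - 1)) \<le> K)"
proof -
  have const: "2 ^ n / real (dfact (2 * n - 1)) = 1 / pochhammer (1/2) n"
    unfolding real_dfact_eq_pochhammer by simp
  show ?thesis
  proof (intro conjI ballI allI impI)
    fix f assume f: "f \<in> L2pos"
    show "T_op n f \<in> L2pos" "L2norm (T_op n f) \<le> 2 ^ n / real (dfact (2 * n - 1)) * L2norm f"
      using T_op_L2_bound[OF f] unfolding const by simp_all
    fix g a b and x :: real
    assume "g \<in> L2pos" "x > 0"
    then show "T_op n (\<lambda>y. a * f y + b * g y) x = a * T_op n f x + b * T_op n g x"
      using iter_int_linear[OF f] by (simp add: T_op_def add_divide_distrib)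
  next
    fix K :: real
    assume "\<forall>f\<in>L2pos. L2norm (T_op n f) \<le> K * L2norm f"
    then show "2 ^ n / real (dfact (2 * n - 1)) \<le> K"
      unfolding const by (rule T_op_bound_ge_inverse_pochhammer_half)
  qed
qed

end
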